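(* Let $D$ be a checkerboard colorable virtual link diagram, and let $\mathbf{G}_D$ and $\mathbf{G}^*_D$ be the two signed ribbon graphs (signed Tait graphs) associated with the two checkerboard colorings of $D$. Then $\mathbf{G}_D$ and $\mathbf{G}^*_D$ are orientable.
   Context: A virtual link diagram is a generic immersion of a closed 1-manifold in the plane whose double points are real crossings (with over/under information) or virtual crossings. It is checkerboard colorable if one can color a small neighbourhood of one side of each arc so that near each real crossing the colored sides alternate, and near each virtual crossing the colorings of the two strands pass through independently; such a diagram has exactly two checkerboard colorings (complementary to each other). A ribbon graph is a surface with boundary given as a union of vertex discs and edge discs (ribbons), vertices and edges meeting in disjoint line segments, each segment on the boundary of exactly one vertex and one edge, each edge containing exactly two segments; it is orientable if it is orientable as a surface; it is signed if each edge carries a sign $\pm$. Construction (Chmutov–Pak) of the signed Tait graph from a checkerboard coloring $C$ of $D$: thicken $D$ to a surface in which, at each virtual crossing, the two bands pass one over the other without touching. The colored neighbourhoods form annuli, each with an exterior circle running along the diagram except near real crossings, where it jumps from one strand to the other (so that the two colored corners at a crossing lie on exterior circles), and an interior circle. Replace each real crossing by an edge-ribbon connecting the corresponding arcs of the exterior circles at the two colored corners, and glue discs along the interior circles. The resulting ribbon graph is $\mathbf{G}_D$ (vertices = the capped annuli, edges = real crossings); the edge at a crossing is signed $+$ if the $A$-smoothing of the crossing joins the two colored corners and $-$ otherwise. Doing the same with the other checkerboard coloring gives $\mathbf{G}^*_D$. *)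

theory Defs
  imports Main
begin

text \<open>The real crossings are described by their darts (the four half-arcs leaving a
  crossing).  rot sends a dart to the next dart counterclockwise around its crossing
  (so x and rot^2 x are the two ends of the same strand); arc sends a dart to the
  dart at the other end of the arc of the diagram leaving along it (arcs may pass
  through virtual crossings, which carry no combinatorial data); over x says
  whether x lies on the over-strand of its crossing.\<close>

record 'a vdiagram =
  darts :: "'a set"
  rot :: "'a \<Rightarrow> 'a"
  arc :: "'a \<Rightarrow> 'a"
  over :: "'a \<Rightarrow> bool"

definition virtual_link_diagram :: "'a vdiagram \<Rightarrow> bool" where
  "virtual_link_diagram D \<longleftrightarrow>
     finite (darts D) \<and> bij_betw (rot D) (darts D) (darts D) \<and>
     (\<forall>x\<in>darts D. (rot D ^^ 4) x = x \<and> rot D x \<noteq> x \<and> (rot D ^^ 2) x \<noteq> x \<and>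
        arc D x \<in> darts D \<and> arc D x \<noteq> x \<and> arc D (arc D x) = x \<and>
        over D (rot D x) \<noteq> over D x)"

text \<open>A side-colouring: C x holds iff the left side of the arc leaving along x
  (i.e. the corner between x and rot x) is coloured.  Going along an arc, the left
  side at x is the right side at arc x.  A checkerboard colouring colours exactly one
  side of each arc, and the coloured sides alternate around every real crossing.\<close>

definition checkerboard_coloring :: "'a vdiagram \<Rightarrow> ('a \<Rightarrow> bool) \<Rightarrow> bool" where
  "checkerboard_coloring D C \<longleftrightarrow>
     (\<forall>x\<in>darts D. C (arc D x) \<noteq> C x \<and> C (rot D x) \<noteq> C x)"

definition checkerboard_colorable :: "'a vdiagram \<Rightarrow> bool" where
  "checkerboard_colorable D \<longleftrightarrow> (\<exists>C. checkerboard_coloring D C)"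

text \<open>Ribbon graphs, described by their flags: the corner points of the cell
  decomposition into vertex discs and edge discs.  seg pairs the two endpoints of an
  attaching segment, vside pairs the two endpoints of a free boundary arc of a vertex
  disc, eside the two endpoints of a free side of an edge ribbon.  Vertex discs are the
  orbits of vside and seg, edge discs the orbits (of size 4) of seg and eside.\<close>

record 'a ribbon_graph =
  flags :: "'a set"
  vside :: "'a \<Rightarrow> 'a"
  seg :: "'a \<Rightarrow> 'a"
  eside :: "'a \<Rightarrow> 'a"

record 'a signed_ribbon_graph = "'a ribbon_graph" +
  sgn :: "'a \<Rightarrow> bool"   \<comment> \<open>sign of the edge containing the flag (True = +)\<close>

definition fpf_involution_on :: "'a set \<Rightarrow> ('a \<Rightarrow> 'a) \<Rightarrow> bool" where
  "fpf_involution_on A f \<longleftrightarrow> (\<forall>x\<in>A. f x \<in> A \<and> f x \<noteq> x \<and> f (f x) = x)"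

definition ribbon_graph :: "('a, 'b) ribbon_graph_scheme \<Rightarrow> bool" where
  "ribbon_graph G \<longleftrightarrow> finite (flags G) \<and>
     fpf_involution_on (flags G) (vside G) \<and>
     fpf_involution_on (flags G) (seg G) \<and>
     fpf_involution_on (flags G) (eside G) \<and>
     (\<forall>x\<in>flags G. seg G (eside G x) = eside G (seg G x) \<and> seg G x \<noteq> eside G x)"

text \<open>Orientability of the surface: each disc (a polygon whose corners are flags)
  can be oriented, and the orientations of a vertex disc and an edge disc induce
  opposite directions on each common segment.  An orientation of a polygon is
  recorded by marking the corners at which the outgoing side is an attaching segment;
  coherence along the segments makes these markings combine into one function or.\<close>

definition orientable :: "('a, 'b) ribbon_graph_scheme \<Rightarrow> bool" where
  "orientable G \<longleftrightarrow> ribbon_graph G \<and>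
     (\<exists>or :: 'a \<Rightarrow> bool. \<forall>x\<in>flags G. or (vside G x) \<noteq> or x \<and> or (seg G x) \<noteq> or x \<and> or (eside G x) \<noteq> or x)"

text \<open>Flags are the
  darts: dart x marks the end, near the arc of x, of the attaching segment at the
  coloured corner containing x (corner (x, rot x) if C x, else (rot^-1 x, x)).
  The exterior circle runs along the arc of x to arc x; the ribbon at a crossing joins
  the two coloured corners, its sides joining x to rot^-1 x resp. rot x.
  The edge is + iff the coloured corners are the A-corners, i.e. iff the first dart of
  the coloured corner is on the over-strand.\<close>

definition tait_graph :: "'a vdiagram \<Rightarrow> ('a \<Rightarrow> bool) \<Rightarrow> 'a signed_ribbon_graph" where
  "tait_graph D C =
     \<lparr> flags = darts D,
       vside = arc D,
       seg = (\<lambda>x. if C x then rot D x else (rot D ^^ 3) x),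
       eside = (\<lambda>x. if C x then (rot D ^^ 3) x else rot D x),
       sgn = (\<lambda>x. over D (if C x then x else (rot D ^^ 3) x)) \<rparr>"

end

theory Submission
  imports Defs
begin

text \<open>The checkerboard colouring itself orients the Tait graph: every side of every
  disc joins two flags of opposite colour, because the colour changes along an arc
  and between adjacent darts of a crossing.  The colourings of G and G* are complementary,
  so both are orientable.\<close>

lemma funpow_numeral_unfold:
  "(f ^^ 3) x = f (f (f x))" "(f ^^ 4) x = f (f (f (f x)))"
  by (simp_all add: numeral_eq_Suc)

lemma checkerboard_coloring_complement:
  "checkerboard_coloring D C \<Longrightarrow> checkerboard_coloring D (\<lambda>x. \<not> C x)"
  unfolding checkerboard_coloring_def by auto

context
  fixes D :: "'a vdiagram" and C :: "'a \<Rightarrow> bool"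
  assumes diagram: "virtual_link_diagram D"
    and coloring: "checkerboard_coloring D C"
begin

private abbreviation "r \<equiv> rot D"

private lemma rot_in_darts: "x \<in> darts D \<Longrightarrow> r x \<in> darts D"
  using diagram unfolding virtual_link_diagram_def bij_betw_def by auto

private lemma rot_order_four:
  assumes "x \<in> darts D"
  shows "r (r (r (r x))) = x" and "r x \<noteq> x" and "r (r x) \<noteq> x"
    and "r (r (r x)) \<noteq> x" and "r x \<noteq> r (r (r x))"
proof -
  show four: "r (r (r (r x))) = x" and one: "r x \<noteq> x" and two: "r (r x) \<noteq> x"
    using diagram assms by (auto simp: virtual_link_diagram_def funpow_numeral_unfold numeral_2_eq_2)
  show "r (r (r x)) \<noteq> x" using one four by metis
  show "r x \<noteq> r (r (r x))" using two four by metis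
qed

private lemma arc_fpf_involution: "fpf_involution_on (darts D) (arc D)"
  using diagram unfolding virtual_link_diagram_def fpf_involution_on_def by auto

private lemma color_changes:
  assumes "x \<in> darts D"
  shows "C (arc D x) \<noteq> C x" and "C (r x) \<noteq> C x" and "C (r (r (r x))) \<noteq> C x"
proof -
  show "C (arc D x) \<noteq> C x" and rot: "C (r x) \<noteq> C x"
    using coloring assms unfolding checkerboard_coloring_def by auto
  have "C (r (r (r (r x)))) \<noteq> C (r (r (r x)))"
    using coloring assms rot_in_darts unfolding checkerboard_coloring_def by blast
  then show "C (r (r (r x))) \<noteq> C x"
    using rot_order_four(1)[OF assms] by simp
qed

lemma ribbon_graph_tait_graph: "ribbon_graph (tait_graph D C)"
  using arc_fpf_involution diagram rot_in_darts rot_order_four color_changes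
  unfolding ribbon_graph_def fpf_involution_on_def tait_graph_def funpow_numeral_unfold
  by (auto simp: virtual_link_diagram_def)

lemma orientable_tait_graph: "orientable (tait_graph D C)"
  unfolding orientable_def
proof (intro conjI ribbon_graph_tait_graph exI[of _ C] ballI)
  fix x assume "x \<in> flags (tait_graph D C)"
  then show "C (vside (tait_graph D C) x) \<noteq> C x"
    and "C (seg (tait_graph D C) x) \<noteq> C x"
    and "C (eside (tait_graph D C) x) \<noteq> C x"
    using color_changes by (auto simp: tait_graph_def funpow_numeral_unfold)
qed

end

theorem lemma3p2:
  assumes "virtual_link_diagram D"
    and "checkerboard_coloring D C"
  shows "orientable (tait_graph D C) \<and> orientable (tait_graph D (\<lambda>x. \<not> C x))"
  using assms orientable_tait_graph checkerboard_coloring_complement by blast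

end
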